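(* Let $\mathcal D_0(x)=\mathcal D(x)$ and, recursively, $\mathcal D_{k+1}(x)=\frac{d}{dx}\mathcal D_k(x)+[\mathcal D_k(x),\mathcal D(x)]$ for $k\ge 0$. Then there exist polynomials $\alpha_0(x),\dots,\alpha_{\dim\mathfrak g}(x)\in\mathbb C[x]$, not all zero, such that $\sum_{k=0}^{\dim\mathfrak g}\alpha_k(x)\mathcal D_k(x)=0$; and for any such polynomials, for every $E\in\mathfrak g$, the function $x\mapsto W_1(x.E)$ satisfies the linear ODE $$\sum_{k=0}^{\dim\mathfrak g}\alpha_k(x)\frac{d^k}{dx^k}W_1(x.E)=0 .$$
   Context: Let $G\subset GL(r,\mathbb C)$ be a complex reductive Lie group given in a faithful matrix representation, with Lie algebra $\mathfrak g\subset\mathfrak{gl}(r,\mathbb C)$; ${\rm Tr}$ denotes the matrix trace. Let $\mathcal D(x)$ be an $r\times r$ matrix whose entries are rational functions of $x$, with $\mathcal D(x)\in\mathfrak g$ for each $x$ away from its poles. Let $\Psi(x)$ be a holomorphic $G$-valued solution of $\frac{d}{dx}\Psi(x)=\mathcal D(x)\Psi(x)$ on a simply connected domain $U\subset\mathbb C$ avoiding the poles of $\mathcal D$. For $x\in U$ and $E\in\mathfrak g$ write $x.E$ for the pair $(x,E)$ and set $M(x.E)=\Psi(x)E\Psi(x)^{-1}$. Define $W_1(x.E)={\rm Tr}\,\mathcal D(x)M(x.E)$. *)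

theory Defs
  imports "HOL-Analysis.Analysis" "HOL-Computational_Algebra.Polynomial"
begin

definition cscale :: "complex \<Rightarrow> complex^'r^'r \<Rightarrow> complex^'r^'r" where
  "cscale c A = (\<chi> i j. c * A $ i $ j)"

interpretation mat_cvs: vector_space "cscale :: complex \<Rightarrow> complex^'r^'r \<Rightarrow> complex^'r^'r"
  by unfold_locales (simp_all add: cscale_def vec_eq_iff algebra_simps)

definition cdim :: "(complex^'r^'r) set \<Rightarrow> nat" where
  "cdim V = vector_space.dim cscale V"

definition commutator :: "complex^'r^'r \<Rightarrow> complex^'r^'r \<Rightarrow> complex^'r^'r" where
  "commutator A B = A ** B - B ** A"

definition lie_subalgebra :: "(complex^'r^'r) set \<Rightarrow> bool" where
  "lie_subalgebra g \<longleftrightarrow> 0 \<in> g \<and> (\<forall>A\<in>g. \<forall>B\<in>g. A + B \<in> g)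
     \<and> (\<forall>c. \<forall>A\<in>g. cscale c A \<in> g) \<and> (\<forall>A\<in>g. \<forall>B\<in>g. commutator A B \<in> g)"

definition mderiv :: "(complex \<Rightarrow> complex^'r^'r) \<Rightarrow> complex \<Rightarrow> complex^'r^'r" where
  "mderiv F x = (\<chi> i j. deriv (\<lambda>y. F y $ i $ j) x)"

primrec Dseq :: "(complex \<Rightarrow> complex^'r^'r) \<Rightarrow> nat \<Rightarrow> complex \<Rightarrow> complex^'r^'r" where
  "Dseq D 0 = D"
| "Dseq D (Suc k) = (\<lambda>x. mderiv (Dseq D k) x + commutator (Dseq D k x) (D x))"

definition Mfun :: "(complex \<Rightarrow> complex^'r^'r) \<Rightarrow> complex \<Rightarrow> complex^'r^'r \<Rightarrow> complex^'r^'r" where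
  "Mfun Psi x E = Psi x ** E ** matrix_inv (Psi x)"

definition W1 :: "(complex \<Rightarrow> complex^'r^'r) \<Rightarrow> (complex \<Rightarrow> complex^'r^'r)
    \<Rightarrow> complex \<Rightarrow> complex^'r^'r \<Rightarrow> complex" where
  "W1 D Psi x E = trace (D x ** Mfun Psi x E)"

definition rational_matrix_with_denom ::
    "(complex \<Rightarrow> complex^'r^'r) \<Rightarrow> complex poly \<Rightarrow> bool" where
  "rational_matrix_with_denom D q \<longleftrightarrow> q \<noteq> 0 \<and>
     (\<exists>p :: 'r \<Rightarrow> 'r \<Rightarrow> complex poly. \<forall>x. poly q x \<noteq> 0 \<longrightarrow>
        (\<forall>i j. D x $ i $ j = poly (p i j) x / poly q x))"

end

(* Write D = P / q with a polynomial matrix P. Then inductively D_k = N_k / q^(k+1) for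
   polynomial matrices N_k, and all values of N_k lie in g: at the roots of q because g is
   closed, and the derivative of a g-valued polynomial matrix is again g-valued because its
   coefficients are in g. The dim g + 1 matrices N_0, ..., N_(dim g) thus live in g[x], where a
   count of dimensions in bounded degree yields a nontrivial C[x]-linear relation; multiplying
   by powers of q gives the polynomials alpha_k.
   For the ODE, M' = [D, M] and cyclicity of the trace give (Tr D_k M)' = Tr D_(k+1) M, so the
   k-th derivative of W_1 is Tr D_k M and the relation among the D_k passes to W_1. *)

theory Submission
  imports Defs "HOL-Library.Function_Algebras"
begin

lemma matrix_inv_inverse:
  assumes "invertible (A :: 'a::semiring_1^'n^'n)"
  shows "A ** matrix_inv A = mat 1" "matrix_inv A ** A = mat 1"
  using someI_ex[OF assms[unfolded invertible_def]] unfolding matrix_inv_def by auto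

lemma matrix_add_rdistrib: "((A :: 'a::semiring_1^'n^'m) + B) ** C = A ** C + B ** C"
  by (simp add: matrix_matrix_mult_def vec_eq_iff sum.distrib distrib_right)

lemma matrix_diff_ldistrib: "(A :: 'a::ring_1^'n^'m) ** (B - C) = A ** B - A ** C"
  by (simp add: matrix_matrix_mult_def vec_eq_iff sum_subtractf right_diff_distrib)

lemma matrix_diff_rdistrib: "((A :: 'a::ring_1^'n^'m) - B) ** C = A ** C - B ** C"
  by (simp add: matrix_matrix_mult_def vec_eq_iff sum_subtractf left_diff_distrib)

lemma matrix_neg_right: "(A :: 'a::ring_1^'n^'m) ** (- B) = - (A ** B)"
  by (simp add: matrix_matrix_mult_def vec_eq_iff sum_negf)

lemma trace_cscale: "trace (cscale c A) = c * trace A"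
  by (simp add: trace_def cscale_def sum_distrib_left)

lemma cscale_matrix_mult: "cscale c A ** B = cscale c (A ** B)"
  by (simp add: cscale_def matrix_matrix_mult_def vec_eq_iff sum_distrib_left mult.assoc)

lemma commutator_cscale:
  "commutator (cscale a A) (cscale b B) = cscale (a * b) (commutator A B)"
  by (simp add: cscale_def commutator_def matrix_matrix_mult_def vec_eq_iff algebra_simps
      sum_distrib_left sum_subtractf)

lemma trace_mult_commutator: "trace (A ** commutator B C) = trace (commutator A B ** C)"
proof -
  have "trace (A ** C ** B) = trace (B ** A ** C)"
    using trace_mul_sym[of "A ** C" B] by (simp add: matrix_mul_assoc)
  then show ?thesis
    by (simp add: commutator_def matrix_diff_ldistrib matrix_diff_rdistrib trace_sub matrix_mul_assoc)
qed

lemma trace_sum_cscale_mult: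
  "trace ((\<Sum>k\<in>K. cscale (c k) (A k)) ** B) = (\<Sum>k\<in>K. c k * trace (A k ** B))"
proof (induction K rule: infinite_finite_induct)
  case (insert k K)
  then show ?case
    by (simp add: matrix_add_rdistrib trace_add cscale_matrix_mult trace_cscale)
qed (simp_all add: trace_def)

lemma lie_subalgebra_subspace: "lie_subalgebra g \<Longrightarrow> mat_cvs.subspace g"
  unfolding lie_subalgebra_def mat_cvs.subspace_def by blast

lemma cscale_of_real: "c *\<^sub>R A = cscale (complex_of_real c) A"
  unfolding cscale_def vec_eq_iff by (simp add: scaleR_conv_of_real[where 'a=complex])

lemma closed_csubspace: "mat_cvs.subspace g \<Longrightarrow> closed g"
  by (intro closed_subspace) (auto simp: subspace_def mat_cvs.subspace_def cscale_of_real)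

lemma in_closed_if_off_finite:
  fixes H :: "'a::{perfect_space, t1_space} \<Rightarrow> 'b::topological_space"
  assumes "closed T" "continuous_on UNIV H" "finite Z" "\<And>x. x \<notin> Z \<Longrightarrow> H x \<in> T"
  shows "H x \<in> T"
proof -
  have "closed (H -` T)"
    using assms(1,2) continuous_on_closed_vimage[of UNIV H] by auto
  moreover have "x islimpt (UNIV - Z)"
    using islimpt_Un_finite[OF assms(3), of x "UNIV - Z"] islimpt_UNIV[of x] by (simp add: Un_absorb)
  then have "x islimpt (H -` T)"
    by (rule islimpt_subset) (use assms(4) in auto)
  ultimately show ?thesis
    using closed_limpt by blast
qed

lemma open_poly_nonzero: "open {x. poly q x \<noteq> (0 :: 'a::real_normed_field)}"
  by (intro open_Collect_neq continuous_intros)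

section \<open>Polynomial matrices with values in a subspace\<close>

abbreviation poly_mat :: "'a::comm_semiring_0 poly^'n^'m \<Rightarrow> 'a \<Rightarrow> 'a^'n^'m" where
  "poly_mat P x \<equiv> map_matrix (\<lambda>p. poly p x) P"

lemma poly_mat_mult: "poly_mat (A ** B) x = poly_mat A x ** (poly_mat B x :: 'a::comm_semiring_1^_^_)"
  by (simp add: vec_eq_iff matrix_matrix_mult_def poly_sum)

lemma poly_mat_add: "poly_mat (A + B) x = poly_mat A x + (poly_mat B x :: 'a::comm_semiring_0^_^_)"
  by (simp add: vec_eq_iff)

lemma poly_mat_diff: "poly_mat (A - B) x = poly_mat A x - (poly_mat B x :: 'a::comm_ring^_^_)"
  by (simp add: vec_eq_iff)

definition degree_mat :: "'a::zero poly^'n^'m \<Rightarrow> nat" where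
  "degree_mat P = Max (range (\<lambda>(i, j). degree (P $ i $ j)))"

lemma degree_le_degree_mat: "degree (P $ i $ j) \<le> degree_mat P"
  unfolding degree_mat_def
proof (rule Max_ge)
  show "finite (range (\<lambda>(i, j). degree (P $ i $ j)))"
    by simp
  show "degree (P $ i $ j) \<in> range (\<lambda>(i, j). degree (P $ i $ j))"
    by (rule image_eqI[where x = "(i, j)"]) simp_all
qed

lemma poly_mat_expansion:
  assumes "degree_mat P \<le> d"
  shows "poly_mat P x = (\<Sum>e\<le>d. cscale (x ^ e) (map_matrix (\<lambda>p. coeff p e) P))"
proof -
  have "poly (P $ i $ j) x = (\<Sum>e\<le>d. coeff (P $ i $ j) e * x ^ e)" for i j
  proof -
    have "degree (P $ i $ j) \<le> d"
      using degree_le_degree_mat assms le_trans by blast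
    then show ?thesis
      unfolding poly_altdef
      by (intro sum.mono_neutral_left) (simp_all add: coeff_eq_0)
  qed
  then show ?thesis
    unfolding vec_eq_iff cscale_def by (simp add: mult.commute)
qed

lemma coeff_0_plus_poly_shift: "coeff p 0 + x * poly (poly_shift 1 p) x = poly p x"
proof -
  have "p = pCons (coeff p 0) (poly_shift 1 p)"
    by (simp add: poly_eq_iff coeff_pCons coeff_poly_shift split: nat.split)
  then have "poly p x = poly (pCons (coeff p 0) (poly_shift 1 p)) x"
    by (rule arg_cong)
  then show ?thesis
    by simp
qed

lemma poly_mat_in_csubspace_if_coeffs:
  assumes "mat_cvs.subspace g" "\<And>e. map_matrix (\<lambda>p. coeff p e) P \<in> g"
  shows "poly_mat P x \<in> g"
  unfolding poly_mat_expansion[OF order_refl]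
  using assms by (intro mat_cvs.subspace_sum mat_cvs.subspace_scale) auto

lemma coeffs_in_csubspace_if_poly_mat:
  assumes g: "mat_cvs.subspace g" and P: "\<And>x. poly_mat P x \<in> g"
  shows "map_matrix (\<lambda>p. coeff p e) P \<in> g"
  using P
proof (induction e arbitrary: P)
  case 0
  show ?case
    using "0.prems"[of 0] by (simp add: poly_0_coeff_0)
next
  case (Suc e)
  define S where "S = map_matrix (poly_shift 1) P"
  have shift: "poly_mat P x = poly_mat P 0 + cscale x (poly_mat S x)" for x
    unfolding S_def cscale_def vec_eq_iff
    by (simp add: poly_0_coeff_0 coeff_0_plus_poly_shift del: One_nat_def)
  have "poly_mat S x \<in> g" for x
  proof (rule in_closed_if_off_finite[where H = "poly_mat S" and Z = "{0}"])
    show "closed g"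
      using g by (rule closed_csubspace)
    show "continuous_on UNIV (poly_mat S)"
      unfolding map_matrix_def by (intro continuous_on_vec_lambda continuous_intros)
    fix y :: complex
    assume "y \<notin> {0}"
    then have "poly_mat S y = cscale (inverse y) (poly_mat P y - poly_mat P 0)"
      unfolding shift[of y] by (simp add: cscale_def vec_eq_iff)
    then show "poly_mat S y \<in> g"
      using Suc.prems g by (simp add: mat_cvs.subspace_scale mat_cvs.subspace_diff)
  qed auto
  from Suc.IH[OF this] show ?case
    by (simp add: S_def map_matrix_def coeff_poly_shift)
qed

lemma poly_mat_pderiv_in_csubspace:
  assumes g: "mat_cvs.subspace g" and P: "\<And>x. poly_mat P x \<in> g"
  shows "poly_mat (map_matrix pderiv P) x \<in> g"
proof (rule poly_mat_in_csubspace_if_coeffs[OF g])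
  fix e
  have "map_matrix (\<lambda>p. coeff p e) (map_matrix pderiv P)
      = cscale (of_nat (Suc e)) (map_matrix (\<lambda>p. coeff p (Suc e)) P)"
    by (simp add: vec_eq_iff cscale_def coeff_pderiv)
  then show "map_matrix (\<lambda>p. coeff p e) (map_matrix pderiv P) \<in> g"
    using coeffs_in_csubspace_if_poly_mat[OF g P] g by (simp add: mat_cvs.subspace_scale)
qed

section \<open>The numerators of the sequence D_k\<close>

lemma rational_matrix_with_denomE:
  assumes "rational_matrix_with_denom D q"
  obtains P where "q \<noteq> 0" "\<And>x. poly q x \<noteq> 0 \<Longrightarrow> D x = cscale (inverse (poly q x)) (poly_mat P x)"
proof -
  from assms obtain p where "q \<noteq> 0"
    and p: "\<And>x i j. poly q x \<noteq> 0 \<Longrightarrow> D x $ i $ j = poly (p i j) x / poly q x"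
    unfolding rational_matrix_with_denom_def by blast
  then show thesis
    by (intro that[of "\<chi> i j. p i j"]) (simp_all add: vec_eq_iff cscale_def divide_inverse mult.commute)
qed

lemma numerator_in_csubspace:
  assumes g: "mat_cvs.subspace g" and q: "q \<noteq> 0"
    and D: "\<And>x. poly q x \<noteq> 0 \<Longrightarrow> D x = cscale (inverse (poly q x)) (poly_mat P x)"
    and Dg: "\<And>x. poly q x \<noteq> 0 \<Longrightarrow> D x \<in> g"
  shows "poly_mat P x \<in> g"
proof (rule in_closed_if_off_finite[where H = "poly_mat P" and Z = "{x. poly q x = 0}"])
  show "closed g"
    using g by (rule closed_csubspace)
  show "continuous_on UNIV (poly_mat P)"
    unfolding map_matrix_def by (intro continuous_on_vec_lambda continuous_intros)
  show "finite {x. poly q x = 0}"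
    using q by (rule poly_roots_finite)
  fix y
  assume "y \<notin> {x. poly q x = 0}"
  then have "poly_mat P y = cscale (poly q y) (D y)" and "D y \<in> g"
    using D Dg by (simp_all add: cscale_def vec_eq_iff)
  then show "poly_mat P y \<in> g"
    using g by (simp add: mat_cvs.subspace_scale)
qed

lemma has_field_derivative_poly_over_power:
  fixes p q :: "'a::real_normed_field poly"
  assumes "poly q x \<noteq> 0"
  shows "((\<lambda>y. poly p y / poly q y ^ Suc k) has_field_derivative
      poly (q * pderiv p - smult (of_nat (Suc k)) (pderiv q) * p) x / poly q x ^ Suc (Suc k)) (at x)"
proof (rule DERIV_cong)
  show "((\<lambda>y. poly p y / poly q y ^ Suc k) has_field_derivative
      (poly (pderiv p) x * poly (q ^ Suc k) x - poly p x * poly (pderiv (q ^ Suc k)) x)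
        / (poly (q ^ Suc k) x * poly (q ^ Suc k) x)) (at x)"
    using assms DERIV_divide[OF poly_DERIV poly_DERIV, of "q ^ Suc k" x p] by simp
  show "(poly (pderiv p) x * poly (q ^ Suc k) x - poly p x * poly (pderiv (q ^ Suc k)) x)
        / (poly (q ^ Suc k) x * poly (q ^ Suc k) x)
      = poly (q * pderiv p - smult (of_nat (Suc k)) (pderiv q) * p) x / poly q x ^ Suc (Suc k)"
    unfolding pderiv_power_Suc using assms by (simp add: field_simps)
qed

\<comment> \<open>If \<open>D = P / q\<close> and \<open>D\<^sub>k = N / q^(k+1)\<close>, then
  \<open>D\<^sub>k' + [D\<^sub>k, D] = (q N' - (k+1) q' N + [N, P]) / q^(k+2)\<close>.\<close>
primrec Dseq_numer :: "complex poly \<Rightarrow> complex poly^'r^'r \<Rightarrow> nat \<Rightarrow> complex poly^'r^'r" where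
  "Dseq_numer q P 0 = P"
| "Dseq_numer q P (Suc k) =
     map_matrix (\<lambda>p. q * pderiv p - smult (of_nat (Suc k)) (pderiv q) * p) (Dseq_numer q P k)
     + (Dseq_numer q P k ** P - P ** Dseq_numer q P k)"

lemma poly_mat_Dseq_numer_step:
  "poly_mat (Dseq_numer q P (Suc k)) x =
     cscale (poly q x) (poly_mat (map_matrix pderiv (Dseq_numer q P k)) x)
     - cscale (of_nat (Suc k) * poly (pderiv q) x) (poly_mat (Dseq_numer q P k) x)
     + commutator (poly_mat (Dseq_numer q P k) x) (poly_mat P x)"
  unfolding Dseq_numer.simps poly_mat_add poly_mat_diff poly_mat_mult commutator_def
  by (simp add: vec_eq_iff cscale_def)

lemma poly_mat_Dseq_numer_in_lie_subalgebra:
  assumes g: "lie_subalgebra g" and P: "\<And>x. poly_mat P x \<in> g"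
  shows "poly_mat (Dseq_numer q P k) x \<in> g"
proof (induction k arbitrary: x)
  case 0
  show ?case
    using P by simp
next
  case (Suc k)
  have "poly_mat (map_matrix pderiv (Dseq_numer q P k)) x \<in> g"
    using poly_mat_pderiv_in_csubspace lie_subalgebra_subspace[OF g] Suc.IH by blast
  then show ?case
    unfolding poly_mat_Dseq_numer_step
    using g Suc.IH P lie_subalgebra_subspace[OF g]
    by (simp add: mat_cvs.subspace_add mat_cvs.subspace_diff mat_cvs.subspace_scale lie_subalgebra_def)
qed

lemma Dseq_eq_numer_over_power:
  assumes D: "\<And>x. poly q x \<noteq> 0 \<Longrightarrow> D x = cscale (inverse (poly q x)) (poly_mat P x)"
    and x: "poly q x \<noteq> 0"
  shows "Dseq D k x = cscale (inverse (poly q x ^ Suc k)) (poly_mat (Dseq_numer q P k) x)"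
  using x
proof (induction k arbitrary: x)
  case 0
  then show ?case
    using D by simp
next
  case (Suc k)
  let ?N = "Dseq_numer q P k"
  let ?N' = "map_matrix (\<lambda>p. q * pderiv p - smult (of_nat (Suc k)) (pderiv q) * p) ?N"
  have "deriv (\<lambda>y. Dseq D k y $ i $ j) x = poly (?N' $ i $ j) x / poly q x ^ Suc (Suc k)" for i j
  proof -
    have "eventually (\<lambda>y. poly q y \<noteq> 0) (nhds x)"
      using eventually_nhds_in_open[OF open_poly_nonzero[of q]] Suc.prems by simp
    then have "eventually (\<lambda>y. Dseq D k y $ i $ j = poly (?N $ i $ j) y / poly q y ^ Suc k) (nhds x)"
      by eventually_elim (simp add: Suc.IH cscale_def divide_inverse mult.commute)
    then have "deriv (\<lambda>y. Dseq D k y $ i $ j) x = deriv (\<lambda>y. poly (?N $ i $ j) y / poly q y ^ Suc k) x"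
      by (rule deriv_cong_ev) simp
    also have "\<dots> = poly (?N' $ i $ j) x / poly q x ^ Suc (Suc k)"
      using has_field_derivative_poly_over_power[OF Suc.prems] by (simp add: DERIV_imp_deriv)
    finally show ?thesis .
  qed
  then have "mderiv (Dseq D k) x = cscale (inverse (poly q x ^ Suc (Suc k))) (poly_mat ?N' x)"
    by (simp add: mderiv_def vec_eq_iff cscale_def divide_inverse mult.commute)
  moreover have "commutator (Dseq D k x) (D x)
      = cscale (inverse (poly q x ^ Suc (Suc k))) (commutator (poly_mat ?N x) (poly_mat P x))"
    by (simp add: Suc.IH[OF Suc.prems] D[OF Suc.prems] commutator_cscale mult.commute)
  ultimately show ?case
    by (simp add: mat_cvs.scale_right_distrib poly_mat_add poly_mat_diff poly_mat_mult commutator_def)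
qed

section \<open>A polynomial relation among the D_k\<close>

lemma (in vector_space) exists_nontrivial_relation_if_card_gt:
  assumes K: "finite K" and W: "finite W" "G ` K \<subseteq> span W" and card: "card W < card K"
  shows "\<exists>u. (\<exists>p\<in>K. u p \<noteq> 0) \<and> (\<Sum>p\<in>K. scale (u p) (G p)) = 0"
proof (cases "inj_on G K")
  case True
  have "dependent (G ` K)"
  proof (rule ccontr)
    assume "independent (G ` K)"
    then have "card (G ` K) \<le> card W"
      using independent_span_bound W by blast
    then show False
      using card_image[OF True] card by simp
  qed
  moreover have "finite (G ` K)"
    using K by simp
  ultimately obtain v where "\<exists>w\<in>G ` K. v w \<noteq> 0" "(\<Sum>w\<in>G ` K. scale (v w) w) = 0"
    by (auto simp: dependent_finite)
  then show ?thesis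
    by (intro exI[of _ "v \<circ> G"]) (simp add: sum.reindex[OF True])
next
  case False
  then obtain p p' where pp': "p \<in> K" "p' \<in> K" "p \<noteq> p'" "G p = G p'"
    unfolding inj_on_def by blast
  define u :: "_ \<Rightarrow> 'a" where "u s = (if s = p then 1 else 0) - (if s = p' then 1 else 0)" for s
  have "(\<Sum>s\<in>K. scale (u s) (G s)) = (\<Sum>s\<in>K. (if s = p then G s else 0) - (if s = p' then G s else 0))"
    by (intro sum.cong) (simp_all add: u_def scale_left_diff_distrib)
  also have "\<dots> = G p - G p'"
    using K pp' by (simp add: sum_subtractf)
  finally have "(\<Sum>s\<in>K. scale (u s) (G s)) = G p - G p'" .
  then show ?thesis
    using pp' by (intro exI[of _ u] conjI bexI[of _ p]) (simp_all add: u_def)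
qed

lemma mat_cvs_span_units: "A \<in> mat_cvs.span (range (\<lambda>p. \<chi> a b. if (a, b) = p then 1 else 0))"
proof -
  have "(\<Sum>p\<in>UNIV. A $ fst p $ snd p * (if (i, j) = p then 1 else 0)) = A $ i $ j" for i j
    by (simp add: if_distrib cong: if_cong)
  then have "A = (\<Sum>p\<in>UNIV. cscale (A $ fst p $ snd p) (\<chi> a b. if (a, b) = p then 1 else 0))"
    by (simp add: vec_eq_iff cscale_def)
  also have "\<dots> \<in> mat_cvs.span (range (\<lambda>p. \<chi> a b. if (a, b) = p then 1 else 0))"
    by (intro mat_cvs.span_sum mat_cvs.span_scale mat_cvs.span_base) auto
  finally show ?thesis .
qed

lemma mat_cvs_independent_finite: "mat_cvs.independent B \<Longrightarrow> finite B"
  using mat_cvs.independent_span_bound[of "range (\<lambda>p. \<chi> a b. if (a, b) = p then 1 else 0)" B]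
    mat_cvs_span_units
  by auto

definition fun_cscale :: "complex \<Rightarrow> (complex \<Rightarrow> complex^'r^'r) \<Rightarrow> complex \<Rightarrow> complex^'r^'r" where
  "fun_cscale c f = (\<lambda>x. cscale c (f x))"

interpretation fun_cvs: vector_space "fun_cscale :: complex \<Rightarrow> (complex \<Rightarrow> complex^'r^'r) \<Rightarrow> _"
  by unfold_locales (simp_all add: fun_cscale_def cscale_def vec_eq_iff fun_eq_iff algebra_simps)

lemma sum_apply: "(\<Sum>b\<in>B. f b) x = (\<Sum>b\<in>B. f b x)"
  by (induction B rule: infinite_finite_induct) auto

lemma monomial_in_fun_cvs_span:
  assumes B: "finite B" and A: "A \<in> mat_cvs.span B" and m: "m \<le> M"
  shows "(\<lambda>x. cscale (x ^ m) A) \<in> fun_cvs.span ((\<lambda>(m, b) x. cscale (x ^ m) b) ` ({..M} \<times> B))"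
proof -
  obtain u where u: "A = (\<Sum>b\<in>B. cscale (u b) b)"
    using A mat_cvs.span_finite[OF B] by auto
  have "(\<lambda>x. cscale (x ^ m) A) = (\<Sum>b\<in>B. fun_cscale (u b) (\<lambda>x. cscale (x ^ m) b))"
    unfolding u by (simp add: fun_eq_iff sum_apply fun_cscale_def mat_cvs.scale_sum_right mult.commute)
  also have "\<dots> \<in> fun_cvs.span ((\<lambda>(m, b) x. cscale (x ^ m) b) ` ({..M} \<times> B))"
    using m by (intro fun_cvs.span_sum fun_cvs.span_scale fun_cvs.span_base) auto
  finally show ?thesis .
qed

lemma poly_mat_shift_in_fun_cvs_span:
  assumes g: "mat_cvs.subspace g" and B: "finite B" "g \<subseteq> mat_cvs.span B"
    and P: "\<And>x. poly_mat P x \<in> g" and deg: "degree_mat P \<le> d" and i: "i + d \<le> M"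
  shows "(\<lambda>x. cscale (x ^ i) (poly_mat P x))
    \<in> fun_cvs.span ((\<lambda>(m, b) x. cscale (x ^ m) b) ` ({..M} \<times> B))"
proof -
  have "(\<lambda>x. cscale (x ^ i) (poly_mat P x))
      = (\<Sum>e\<le>d. (\<lambda>x. cscale (x ^ (i + e)) (map_matrix (\<lambda>p. coeff p e) P)))"
    using deg by (simp add: fun_eq_iff sum_apply poly_mat_expansion mat_cvs.scale_sum_right power_add)
  also have "\<dots> \<in> fun_cvs.span ((\<lambda>(m, b) x. cscale (x ^ m) b) ` ({..M} \<times> B))"
  proof (rule fun_cvs.span_sum)
    fix e
    assume "e \<in> {..d}"
    then have "i + e \<le> M"
      using i by simp
    moreover have "map_matrix (\<lambda>p. coeff p e) P \<in> mat_cvs.span B"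
      using coeffs_in_csubspace_if_poly_mat[OF g P] B(2) by blast
    ultimately show "(\<lambda>x. cscale (x ^ (i + e)) (map_matrix (\<lambda>p. coeff p e) P))
        \<in> fun_cvs.span ((\<lambda>(m, b) x. cscale (x ^ m) b) ` ({..M} \<times> B))"
      by (rule monomial_in_fun_cvs_span[OF B(1), rotated])
  qed
  finally show ?thesis .
qed

lemma poly_relation_from_monomial_relation:
  fixes F :: "nat \<Rightarrow> complex \<Rightarrow> complex^'r^'r"
  assumes nontrivial: "\<exists>p\<in>{..n} \<times> {..N}. u p \<noteq> 0"
    and relation: "(\<Sum>p\<in>{..n} \<times> {..N}. fun_cscale (u p) ((\<lambda>(k, i) x. cscale (x ^ i) (F k x)) p)) = 0"
  shows "\<exists>\<beta>. (\<exists>k\<le>n. \<beta> k \<noteq> 0) \<and> (\<forall>x. (\<Sum>k\<le>n. cscale (poly (\<beta> k) x) (F k x)) = 0)"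
proof -
  define \<beta> where "\<beta> k = (\<Sum>i\<le>N. monom (u (k, i)) i)" for k
  obtain k0 i0 where k0: "k0 \<le> n" "i0 \<le> N" "u (k0, i0) \<noteq> 0"
    using nontrivial by auto
  then have "coeff (\<beta> k0) i0 \<noteq> 0"
    unfolding \<beta>_def by (simp add: coeff_sum)
  then have "\<exists>k\<le>n. \<beta> k \<noteq> 0"
    using k0(1) by auto
  moreover have "(\<Sum>k\<le>n. cscale (poly (\<beta> k) x) (F k x)) = 0" for x
  proof -
    have "(\<Sum>k\<le>n. cscale (poly (\<beta> k) x) (F k x))
        = (\<Sum>k\<le>n. \<Sum>i\<le>N. fun_cscale (u (k, i)) (\<lambda>x. cscale (x ^ i) (F k x)) x)"
      by (simp add: \<beta>_def fun_cscale_def poly_sum poly_monom mat_cvs.scale_sum_left)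
    also have "\<dots> = (\<Sum>p\<in>{..n} \<times> {..N}. fun_cscale (u p) ((\<lambda>(k, i) x. cscale (x ^ i) (F k x)) p)) x"
      by (simp add: sum.cartesian_product sum_apply split_def)
    finally show ?thesis
      using relation by simp
  qed
  ultimately show ?thesis
    by blast
qed

lemma poly_mat_relation_exists:
  fixes P :: "nat \<Rightarrow> complex poly^'r^'r"
  assumes g: "mat_cvs.subspace g" and P: "\<And>k x. poly_mat (P k) x \<in> g"
  shows "\<exists>\<beta>. (\<exists>k\<le>cdim g. \<beta> k \<noteq> 0) \<and>
    (\<forall>x. (\<Sum>k\<le>cdim g. cscale (poly (\<beta> k) x) (poly_mat (P k) x)) = 0)"
proof -
  define n where "n = cdim g"
  obtain B where "B \<subseteq> g" "mat_cvs.independent B" and g_span: "g \<subseteq> mat_cvs.span B"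
    and "card B = mat_cvs.dim g"
    by (rule mat_cvs.basis_exists)
  then have B: "finite B" "card B = n"
    using mat_cvs_independent_finite unfolding n_def cdim_def by auto
  define d where "d = Max ((\<lambda>k. degree_mat (P k)) ` {..n})"
  \<comment> \<open>The \<open>(n + 1) (N + 1)\<close> functions \<open>x\<^sup>i P\<^sub>k(x)\<close>, \<open>k \<le> n\<close>, \<open>i \<le> N\<close>, lie in the span of the
    \<open>(M + 1) n\<close> functions \<open>x\<^sup>m b\<close>, \<open>m \<le> M\<close>, \<open>b \<in> B\<close>; for \<open>N = n d\<close> and \<open>M = N + d\<close> that is one too few.\<close>
  define N where "N = n * d"
  define M where "M = N + d"
  define K where "K = {..n} \<times> {..N}"
  define G where "G = (\<lambda>(k, i) x. cscale (x ^ i) (poly_mat (P k) x))"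
  define W where "W = (\<lambda>(m, b) x. cscale (x ^ m) b) ` ({..M} \<times> B)"
  have "G ` K \<subseteq> fun_cvs.span W"
  proof clarify
    fix k i
    assume "(k, i) \<in> K"
    then have "k \<le> n" "i + d \<le> M"
      unfolding K_def M_def by auto
    moreover from \<open>k \<le> n\<close> have "degree_mat (P k) \<le> d"
      unfolding d_def by (intro Max_ge) auto
    ultimately show "G (k, i) \<in> fun_cvs.span W"
      unfolding G_def W_def using poly_mat_shift_in_fun_cvs_span[OF g B(1) g_span P] by simp
  qed
  moreover have "card W < card K"
  proof -
    have "card W \<le> (M + 1) * n"
      unfolding W_def using card_image_le[of "{..M} \<times> B"] B by (simp add: card_cartesian_product)
    also have "\<dots> < (n + 1) * (N + 1)"
      unfolding M_def N_def by (simp add: algebra_simps)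
    finally show ?thesis
      unfolding K_def by (simp add: card_cartesian_product)
  qed
  ultimately obtain u where "\<exists>p\<in>K. u p \<noteq> 0" "(\<Sum>p\<in>K. fun_cscale (u p) (G p)) = 0"
    using fun_cvs.exists_nontrivial_relation_if_card_gt[of K W G] B(1) unfolding K_def W_def by auto
  then show ?thesis
    unfolding n_def K_def G_def by (rule poly_relation_from_monomial_relation)
qed

lemma Dseq_relation_exists:
  assumes g: "lie_subalgebra g" and rat: "rational_matrix_with_denom D q"
    and Dg: "\<And>x. poly q x \<noteq> 0 \<Longrightarrow> D x \<in> g"
  shows "\<exists>\<alpha>. (\<exists>k\<le>cdim g. \<alpha> k \<noteq> 0) \<and>
    (\<forall>x. poly q x \<noteq> 0 \<longrightarrow> (\<Sum>k\<le>cdim g. cscale (poly (\<alpha> k) x) (Dseq D k x)) = 0)"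
proof -
  obtain P where q: "q \<noteq> 0"
    and D: "\<And>x. poly q x \<noteq> 0 \<Longrightarrow> D x = cscale (inverse (poly q x)) (poly_mat P x)"
    using rational_matrix_with_denomE[OF rat] by blast
  have "poly_mat P x \<in> g" for x
    using numerator_in_csubspace[OF lie_subalgebra_subspace[OF g] q D Dg] .
  then have "poly_mat (Dseq_numer q P k) x \<in> g" for k x
    using poly_mat_Dseq_numer_in_lie_subalgebra[OF g] by blast
  then obtain \<beta> where \<beta>: "\<exists>k\<le>cdim g. \<beta> k \<noteq> 0"
    "\<And>x. (\<Sum>k\<le>cdim g. cscale (poly (\<beta> k) x) (poly_mat (Dseq_numer q P k) x)) = 0"
    using poly_mat_relation_exists[OF lie_subalgebra_subspace[OF g]] by blast
  define \<alpha> where "\<alpha> k = \<beta> k * q ^ Suc k" for k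
  have "\<exists>k\<le>cdim g. \<alpha> k \<noteq> 0"
    using \<beta>(1) q by (auto simp: \<alpha>_def)
  moreover have "(\<Sum>k\<le>cdim g. cscale (poly (\<alpha> k) x) (Dseq D k x)) = 0" if x: "poly q x \<noteq> 0" for x
  proof -
    have "poly (\<alpha> k) x * inverse (poly q x ^ Suc k) = poly (\<beta> k) x" for k
      using x by (simp add: \<alpha>_def field_simps)
    then have "cscale (poly (\<alpha> k) x) (Dseq D k x) = cscale (poly (\<beta> k) x) (poly_mat (Dseq_numer q P k) x)"
      for k
      by (simp add: Dseq_eq_numer_over_power[OF D x] mat_cvs.scale_scale)
    then show ?thesis
      using \<beta>(2) by simp
  qed
  ultimately show ?thesis
    by blast
qed

section \<open>Derivatives of W_1\<close>

definition has_matrix_derivative :: "(complex \<Rightarrow> complex^'n^'m) \<Rightarrow> complex^'n^'m \<Rightarrow> complex \<Rightarrow> bool" where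
  "has_matrix_derivative F F' x \<longleftrightarrow> (\<forall>i j. ((\<lambda>y. F y $ i $ j) has_field_derivative F' $ i $ j) (at x))"

lemma has_matrix_derivative_const: "has_matrix_derivative (\<lambda>y. A) 0 x"
  unfolding has_matrix_derivative_def by simp

lemma has_matrix_derivative_mult:
  assumes "has_matrix_derivative F F' x" "has_matrix_derivative G G' x"
  shows "has_matrix_derivative (\<lambda>y. F y ** G y) (F' ** G x + F x ** G') x"
  unfolding has_matrix_derivative_def
proof (intro allI)
  fix i j
  have "((\<lambda>y. \<Sum>l\<in>UNIV. F y $ i $ l * G y $ l $ j) has_field_derivative
      (\<Sum>l\<in>UNIV. F' $ i $ l * G x $ l $ j + F x $ i $ l * G' $ l $ j)) (at x)"
    using assms unfolding has_matrix_derivative_def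
    by (intro DERIV_sum) (auto intro!: derivative_eq_intros)
  then show "((\<lambda>y. (F y ** G y) $ i $ j) has_field_derivative (F' ** G x + F x ** G') $ i $ j) (at x)"
    by (simp add: matrix_matrix_mult_def sum.distrib)
qed

lemma has_matrix_derivative_unique:
  "has_matrix_derivative F F' x \<Longrightarrow> has_matrix_derivative F F'' x \<Longrightarrow> F' = F''"
  unfolding has_matrix_derivative_def vec_eq_iff using DERIV_unique by blast

lemma has_matrix_derivative_transform_open:
  assumes "has_matrix_derivative F F' x" "open S" "x \<in> S" "\<And>y. y \<in> S \<Longrightarrow> F y = G y"
  shows "has_matrix_derivative G F' x"
  unfolding has_matrix_derivative_def
proof (intro allI)
  fix i j
  from assms(1) have "((\<lambda>y. F y $ i $ j) has_field_derivative F' $ i $ j) (at x)"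
    unfolding has_matrix_derivative_def by blast
  then show "((\<lambda>y. G y $ i $ j) has_field_derivative F' $ i $ j) (at x)"
    by (rule has_field_derivative_transform_within_open[OF _ assms(2,3)]) (simp add: assms(4))
qed

lemma has_matrix_derivative_mderiv:
  "(\<And>i j. (\<lambda>y. F y $ i $ j) field_differentiable at x) \<Longrightarrow> has_matrix_derivative F (mderiv F x) x"
  unfolding has_matrix_derivative_def mderiv_def by (simp add: DERIV_deriv_iff_field_differentiable)

lemma has_matrix_derivative_trace:
  "has_matrix_derivative F F' x \<Longrightarrow> ((\<lambda>y. trace (F y)) has_field_derivative trace F') (at x)"
  unfolding has_matrix_derivative_def trace_def by (intro DERIV_sum) auto

lemma matrix_inv_cramer:
  fixes A :: "complex^'n^'n"
  assumes "invertible A"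
  shows "matrix_inv A $ i $ k = det (\<chi> a b. if b = i then (if a = k then 1 else 0) else A $ a $ b) / det A"
proof -
  have "A *v (matrix_inv A *v axis k 1) = axis k 1"
    by (simp add: matrix_vector_mul_assoc matrix_inv_inverse[OF assms])
  then have Cramer: "matrix_inv A *v axis k 1
      = (\<chi> l. det (\<chi> a b. if b = l then axis k 1 $ a else A $ a $ b) / det A)"
    using cramer assms invertible_det_nz by blast
  have "matrix_inv A $ i $ k = (matrix_inv A *v axis k 1) $ i"
    by (simp add: matrix_vector_mult_def axis_def if_distrib cong: if_cong)
  also have "\<dots> = det (\<chi> a b. if b = i then axis k 1 $ a else A $ a $ b) / det A"
    unfolding Cramer by simp
  also have "(\<chi> a b. if b = i then axis k 1 $ a else A $ a $ b)
      = (\<chi> a b. if b = i then (if a = k then 1 else 0) else A $ a $ b)"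
    by (simp add: vec_eq_iff axis_def)
  finally show ?thesis .
qed

lemma holomorphic_on_det:
  "(\<And>a b. (\<lambda>y. F y $ a $ b) holomorphic_on S) \<Longrightarrow> (\<lambda>y. det (F y)) holomorphic_on S"
  unfolding det_def
  by (intro holomorphic_on_sum holomorphic_on_mult holomorphic_on_prod holomorphic_on_const)

lemma holomorphic_on_matrix_inv:
  fixes F :: "complex \<Rightarrow> complex^'n^'n"
  assumes F: "\<And>a b. (\<lambda>y. F y $ a $ b) holomorphic_on S" and inv: "\<And>y. y \<in> S \<Longrightarrow> invertible (F y)"
  shows "(\<lambda>y. matrix_inv (F y) $ i $ k) holomorphic_on S"
proof (rule holomorphic_transform)
  have "(\<lambda>y. (\<chi> a b. if b = i then (if a = k then 1 else 0) else F y $ a $ b) $ a $ b) holomorphic_on S" for a b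
    using F by (cases "a = k"; cases "b = i") simp_all
  then show "(\<lambda>y. det (\<chi> a b. if b = i then (if a = k then 1 else 0) else F y $ a $ b) / det (F y))
      holomorphic_on S"
    using inv invertible_det_nz by (intro holomorphic_on_divide holomorphic_on_det F) auto
  show "\<And>y. y \<in> S \<Longrightarrow> det (\<chi> a b. if b = i then (if a = k then 1 else 0) else F y $ a $ b) / det (F y)
      = matrix_inv (F y) $ i $ k"
    by (simp add: matrix_inv_cramer inv)
qed

lemma matrix_inv_has_matrix_derivative:
  fixes F :: "complex \<Rightarrow> complex^'n^'n"
  assumes S: "open S" "x \<in> S" and inv: "\<And>y. y \<in> S \<Longrightarrow> invertible (F y)"
    and F': "\<And>y. y \<in> S \<Longrightarrow> has_matrix_derivative F (F' y) y"
  shows "has_matrix_derivative (\<lambda>y. matrix_inv (F y))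
    (- (matrix_inv (F x) ** F' x ** matrix_inv (F x))) x"
proof -
  define N where "N y = matrix_inv (F y)" for y
  have "(\<lambda>y. F y $ a $ b) holomorphic_on S" for a b
    using F' S(1) unfolding has_matrix_derivative_def by (subst holomorphic_on_open) auto
  then have "(\<lambda>y. N y $ i $ k) holomorphic_on S" for i k
    unfolding N_def using inv by (rule holomorphic_on_matrix_inv)
  then have N': "has_matrix_derivative N (mderiv N x) x"
    using S by (intro has_matrix_derivative_mderiv holomorphic_on_imp_differentiable_at)
  have "has_matrix_derivative (\<lambda>y. F y ** N y) (F' x ** N x + F x ** mderiv N x) x"
    using has_matrix_derivative_mult[OF F'[OF S(2)] N'] .
  moreover have "has_matrix_derivative (\<lambda>y. F y ** N y) 0 x"
    using S by (rule has_matrix_derivative_transform_open[OF has_matrix_derivative_const])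
      (simp add: N_def matrix_inv_inverse inv)
  ultimately have "F' x ** N x + F x ** mderiv N x = 0"
    by (rule has_matrix_derivative_unique)
  then have "N x ** (F' x ** N x + F x ** mderiv N x) = 0"
    by simp
  then have "mderiv N x = - (N x ** F' x ** N x)"
    by (simp add: matrix_add_ldistrib matrix_mul_assoc N_def matrix_inv_inverse inv S(2)
        eq_neg_iff_add_eq_0 add.commute)
  with N' show ?thesis
    unfolding N_def by simp
qed

lemma Mfun_has_matrix_derivative:
  assumes U: "open U" "x \<in> U" and inv: "\<And>y. y \<in> U \<Longrightarrow> invertible (Psi y)"
    and ode: "\<And>y i j. y \<in> U \<Longrightarrow>
      ((\<lambda>z. Psi z $ i $ j) has_field_derivative (D y ** Psi y) $ i $ j) (at y)"
  shows "has_matrix_derivative (\<lambda>y. Mfun Psi y E) (commutator (D x) (Mfun Psi x E)) x"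
proof -
  have Psi': "has_matrix_derivative Psi (D y ** Psi y) y" if "y \<in> U" for y
    using ode[OF that] unfolding has_matrix_derivative_def by blast
  have "has_matrix_derivative (\<lambda>y. Psi y ** E) (D x ** Psi x ** E + Psi x ** 0) x"
    by (rule has_matrix_derivative_mult[OF Psi'[OF U(2)] has_matrix_derivative_const])
  then have "has_matrix_derivative (\<lambda>y. Psi y ** E ** matrix_inv (Psi y))
      ((D x ** Psi x ** E + Psi x ** 0) ** matrix_inv (Psi x)
        + Psi x ** E ** - (matrix_inv (Psi x) ** (D x ** Psi x) ** matrix_inv (Psi x))) x"
    by (rule has_matrix_derivative_mult[OF _ matrix_inv_has_matrix_derivative[OF U inv Psi']])
  moreover have "(D x ** Psi x ** E + Psi x ** 0) ** matrix_inv (Psi x)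
        + Psi x ** E ** - (matrix_inv (Psi x) ** (D x ** Psi x) ** matrix_inv (Psi x))
      = commutator (D x) (Mfun Psi x E)"
  proof -
    have cancel: "B ** Psi x ** matrix_inv (Psi x) = B" for B :: "complex^'a^'a"
      by (simp add: matrix_mul_assoc[symmetric] matrix_inv_inverse[OF inv[OF U(2)]])
    show ?thesis
      by (simp add: commutator_def Mfun_def matrix_neg_right matrix_mul_assoc cancel)
  qed
  ultimately show ?thesis
    unfolding Mfun_def by simp
qed

lemma Dseq_has_matrix_derivative:
  assumes rat: "rational_matrix_with_denom D q" and x: "poly q x \<noteq> 0"
  shows "has_matrix_derivative (Dseq D k) (mderiv (Dseq D k) x) x"
proof (rule has_matrix_derivative_mderiv)
  fix i j
  obtain P where D: "\<And>x. poly q x \<noteq> 0 \<Longrightarrow> D x = cscale (inverse (poly q x)) (poly_mat P x)"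
    using rational_matrix_with_denomE[OF rat] by blast
  have "((\<lambda>y. poly (Dseq_numer q P k $ i $ j) y / poly q y ^ Suc k) has_field_derivative
      poly (q * pderiv (Dseq_numer q P k $ i $ j) - smult (of_nat (Suc k)) (pderiv q) * Dseq_numer q P k $ i $ j) x
        / poly q x ^ Suc (Suc k)) (at x)"
    using x by (rule has_field_derivative_poly_over_power)
  then have "((\<lambda>y. Dseq D k y $ i $ j) has_field_derivative
      poly (q * pderiv (Dseq_numer q P k $ i $ j) - smult (of_nat (Suc k)) (pderiv q) * Dseq_numer q P k $ i $ j) x
        / poly q x ^ Suc (Suc k)) (at x)"
    by (rule has_field_derivative_transform_within_open[OF _ open_poly_nonzero[of q]])
      (simp_all add: x Dseq_eq_numer_over_power[OF D] cscale_def divide_inverse mult.commute)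
  then show "(\<lambda>y. Dseq D k y $ i $ j) field_differentiable at x"
    unfolding field_differentiable_def by blast
qed

lemma trace_Dseq_Mfun_has_matrix_derivative:
  assumes rat: "rational_matrix_with_denom D q"
    and U: "open U" "x \<in> U" and U_nopole: "\<And>x. x \<in> U \<Longrightarrow> poly q x \<noteq> 0"
    and inv: "\<And>y. y \<in> U \<Longrightarrow> invertible (Psi y)"
    and ode: "\<And>y i j. y \<in> U \<Longrightarrow>
      ((\<lambda>z. Psi z $ i $ j) has_field_derivative (D y ** Psi y) $ i $ j) (at y)"
  shows "((\<lambda>y. trace (Dseq D k y ** Mfun Psi y E)) has_field_derivative
    trace (Dseq D (Suc k) x ** Mfun Psi x E)) (at x)"
proof -
  have "has_matrix_derivative (\<lambda>y. Dseq D k y ** Mfun Psi y E)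
      (mderiv (Dseq D k) x ** Mfun Psi x E + Dseq D k x ** commutator (D x) (Mfun Psi x E)) x"
    by (rule has_matrix_derivative_mult[OF Dseq_has_matrix_derivative[OF rat U_nopole[OF U(2)]]
          Mfun_has_matrix_derivative[OF U inv ode]])
  then have "((\<lambda>y. trace (Dseq D k y ** Mfun Psi y E)) has_field_derivative
      trace (mderiv (Dseq D k) x ** Mfun Psi x E + Dseq D k x ** commutator (D x) (Mfun Psi x E))) (at x)"
    by (rule has_matrix_derivative_trace)
  moreover have "trace (mderiv (Dseq D k) x ** Mfun Psi x E + Dseq D k x ** commutator (D x) (Mfun Psi x E))
      = trace (Dseq D (Suc k) x ** Mfun Psi x E)"
    by (simp add: trace_add matrix_add_rdistrib trace_mult_commutator)
  ultimately show ?thesis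
    by simp
qed

lemma W1_higher_deriv:
  assumes rat: "rational_matrix_with_denom D q"
    and U: "open U" and U_nopole: "\<And>x. x \<in> U \<Longrightarrow> poly q x \<noteq> 0"
    and inv: "\<And>y. y \<in> U \<Longrightarrow> invertible (Psi y)"
    and ode: "\<And>y i j. y \<in> U \<Longrightarrow>
      ((\<lambda>z. Psi z $ i $ j) has_field_derivative (D y ** Psi y) $ i $ j) (at y)"
    and x: "x \<in> U"
  shows "(deriv ^^ k) (\<lambda>y. W1 D Psi y E) x = trace (Dseq D k x ** Mfun Psi x E)"
  using x
proof (induction k arbitrary: x)
  case 0
  then show ?case
    by (simp add: W1_def)
next
  case (Suc k)
  have "eventually (\<lambda>y. y \<in> U) (nhds x)"
    using U Suc.prems by (rule eventually_nhds_in_open)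
  then have "eventually (\<lambda>y. (deriv ^^ k) (\<lambda>y. W1 D Psi y E) y = trace (Dseq D k y ** Mfun Psi y E)) (nhds x)"
    by eventually_elim (rule Suc.IH)
  then have "(deriv ^^ Suc k) (\<lambda>y. W1 D Psi y E) x = deriv (\<lambda>y. trace (Dseq D k y ** Mfun Psi y E)) x"
    by (simp add: deriv_cong_ev)
  also have "\<dots> = trace (Dseq D (Suc k) x ** Mfun Psi x E)"
    by (rule DERIV_imp_deriv, rule trace_Dseq_Mfun_has_matrix_derivative[OF rat U Suc.prems U_nopole inv ode])
  finally show ?case .
qed

lemma W1_linear_ode:
  assumes rat: "rational_matrix_with_denom D q"
    and U: "open U" and U_nopole: "\<And>x. x \<in> U \<Longrightarrow> poly q x \<noteq> 0"
    and inv: "\<And>y. y \<in> U \<Longrightarrow> invertible (Psi y)"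
    and ode: "\<And>y i j. y \<in> U \<Longrightarrow>
      ((\<lambda>z. Psi z $ i $ j) has_field_derivative (D y ** Psi y) $ i $ j) (at y)"
    and relation: "\<And>x. poly q x \<noteq> 0 \<Longrightarrow> (\<Sum>k\<le>n. cscale (poly (\<alpha> k) x) (Dseq D k x)) = 0"
    and x: "x \<in> U"
  shows "(\<Sum>k\<le>n. poly (\<alpha> k) x * (deriv ^^ k) (\<lambda>y. W1 D Psi y E) x) = 0"
proof -
  have "(\<Sum>k\<le>n. poly (\<alpha> k) x * (deriv ^^ k) (\<lambda>y. W1 D Psi y E) x)
      = (\<Sum>k\<le>n. poly (\<alpha> k) x * trace (Dseq D k x ** Mfun Psi x E))"
    by (simp add: W1_higher_deriv[OF rat U U_nopole inv ode x])
  also have "\<dots> = trace ((\<Sum>k\<le>n. cscale (poly (\<alpha> k) x) (Dseq D k x)) ** Mfun Psi x E)"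
    by (simp add: trace_sum_cscale_mult)
  also have "\<dots> = 0"
    by (simp add: relation[OF U_nopole[OF x]] trace_def)
  finally show ?thesis .
qed

theorem mainTheorem1:
  fixes D Psi :: "complex \<Rightarrow> complex^'r^'r"
    and g :: "(complex^'r^'r) set"
    and q :: "complex poly"
    and U :: "complex set"
  assumes g: "lie_subalgebra g"
    and rat: "rational_matrix_with_denom D q"
    and Dg: "\<And>x. poly q x \<noteq> 0 \<Longrightarrow> D x \<in> g"
    and U: "open U" "simply_connected U" "U \<noteq> {}"
    and U_nopole: "\<And>x. x \<in> U \<Longrightarrow> poly q x \<noteq> 0"
    and Psi_inv: "\<And>x. x \<in> U \<Longrightarrow> invertible (Psi x)"
    and Psi_ode: "\<And>x i j. x \<in> U \<Longrightarrow>
        ((\<lambda>y. Psi y $ i $ j) has_field_derivative (D x ** Psi x) $ i $ j) (at x)"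
  shows "(\<exists>\<alpha> :: nat \<Rightarrow> complex poly. (\<exists>k\<le>cdim g. \<alpha> k \<noteq> 0) \<and>
            (\<forall>x. poly q x \<noteq> 0 \<longrightarrow>
               (\<Sum>k\<le>cdim g. cscale (poly (\<alpha> k) x) (Dseq D k x)) = 0))
       \<and> (\<forall>\<alpha> :: nat \<Rightarrow> complex poly. (\<exists>k\<le>cdim g. \<alpha> k \<noteq> 0) \<and>
            (\<forall>x. poly q x \<noteq> 0 \<longrightarrow>
               (\<Sum>k\<le>cdim g. cscale (poly (\<alpha> k) x) (Dseq D k x)) = 0) \<longrightarrow>
            (\<forall>E\<in>g. \<forall>x\<in>U.
               (\<Sum>k\<le>cdim g. poly (\<alpha> k) x * (deriv ^^ k) (\<lambda>y. W1 D Psi y E) x) = 0))"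
proof (intro conjI allI impI ballI)
  show "\<exists>\<alpha>. (\<exists>k\<le>cdim g. \<alpha> k \<noteq> 0) \<and>
      (\<forall>x. poly q x \<noteq> 0 \<longrightarrow> (\<Sum>k\<le>cdim g. cscale (poly (\<alpha> k) x) (Dseq D k x)) = 0)"
    by (rule Dseq_relation_exists[OF g rat Dg])
next
  fix \<alpha> :: "nat \<Rightarrow> complex poly" and E x
  assume "(\<exists>k\<le>cdim g. \<alpha> k \<noteq> 0) \<and>
      (\<forall>x. poly q x \<noteq> 0 \<longrightarrow> (\<Sum>k\<le>cdim g. cscale (poly (\<alpha> k) x) (Dseq D k x)) = 0)"
    and "x \<in> U"
  then show "(\<Sum>k\<le>cdim g. poly (\<alpha> k) x * (deriv ^^ k) (\<lambda>y. W1 D Psi y E) x) = 0"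
    by (intro W1_linear_ode[OF rat U(1) U_nopole Psi_inv Psi_ode]) auto
qed

end
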